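(* Let $(E,\mathcal{E},\nu)$ be a $\sigma$-finite measure space, $\phi$ a Young function satisfying the $\Delta_2$-condition, $w$ a weight function, and $\Psi:E\to E$ a non-singular measurable transformation such that the composition operator $C_\Psi f=f\circ\Psi$ is a bounded linear operator on the Orlicz-Lorentz space $L_{(\phi,w)}$. If $\Psi$ is pre-positive, then $\mathcal{A}(C_\Psi)=0$.
   Context: A Young function is a convex $\phi:[0,\infty)\to[0,\infty)$ with $\phi(x)=0\iff x=0$ and $\lim_{x\to\infty}\phi(x)=\infty$; $\Delta_2$-condition: $\phi(2x)\le k\phi(x)$ for some $k>0$ and all $x>0$. A weight function is a non-increasing locally integrable $w:(0,\infty)\to(0,\infty)$ with $\int_0^\infty w=\infty$. For measurable $f$, $\nu_f(s)=\nu\{|f|>s\}$, $f^*(t)=\inf\{s>0:\nu_f(s)\le t\}$; $L_{(\phi,w)}$ is the space of measurable $f:E\to\mathbb{C}$ with $\int_0^\infty\phi(\alpha f^*(t))w(t)\,dt<\infty$ for some $\alpha>0$, with the Luxemburg norm. $\Psi$ non-singular: $\nu(\Psi^{-1}(S))=0$ whenever $\nu(S)=0$. $\Psi$ is pre-positive if $\nu(\Psi^{-1}(A))>0$ whenever $\nu(A)>0$. The ascent $\mathcal{A}(T)$ is the smallest non-negative integer $m$ with $\mathcal{N}(T^m)=\mathcal{N}(T^{m+1})$ ($\mathcal{N}$ = kernel, $T^0=I$), and $\infty$ if none exists. *)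

theory Defs
  imports "HOL-Analysis.Analysis"
begin

definition young_function :: "(real \<Rightarrow> real) \<Rightarrow> bool" where
  "young_function \<phi> \<longleftrightarrow>
     convex_on {0..} \<phi> \<and> (\<forall>x\<ge>0. \<phi> x \<ge> 0) \<and> (\<forall>x\<ge>0. \<phi> x = 0 \<longleftrightarrow> x = 0)
     \<and> filterlim \<phi> at_top at_top"

definition delta2 :: "(real \<Rightarrow> real) \<Rightarrow> bool" where
  "delta2 \<phi> \<longleftrightarrow> (\<exists>k>0. \<forall>x>0. \<phi> (2 * x) \<le> k * \<phi> x)"

text \<open>Weight function on (0,infinity); values at t <= 0 are irrelevant.\<close>
definition weight_function :: "(real \<Rightarrow> real) \<Rightarrow> bool" where
  "weight_function w \<longleftrightarrow>
     (\<forall>s t. 0 < s \<and> s \<le> t \<longrightarrow> w t \<le> w s) \<and> (\<forall>t>0. w t > 0)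
     \<and> (\<forall>a b. 0 < a \<longrightarrow> set_integrable lborel {a..b} w)
     \<and> (\<integral>\<^sup>+ t\<in>{0<..}. ennreal (w t) \<partial>lborel) = \<infinity>"

definition dist_fun :: "'a measure \<Rightarrow> ('a \<Rightarrow> complex) \<Rightarrow> real \<Rightarrow> ennreal" where
  "dist_fun M f s = emeasure M {x \<in> space M. s < cmod (f x)}"

text \<open>Decreasing rearrangement, with value infinity when the defining set is empty.\<close>
definition decr_rearr :: "'a measure \<Rightarrow> ('a \<Rightarrow> complex) \<Rightarrow> real \<Rightarrow> ennreal" where
  "decr_rearr M f t = Inf {ennreal s | s. 0 < s \<and> dist_fun M f s \<le> ennreal t}"

definition phi_enn :: "(real \<Rightarrow> real) \<Rightarrow> ennreal \<Rightarrow> ennreal" where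
  "phi_enn \<phi> x = (if x = \<infinity> then \<infinity> else ennreal (\<phi> (enn2real x)))"

definition ol_modular ::
  "(real \<Rightarrow> real) \<Rightarrow> (real \<Rightarrow> real) \<Rightarrow> 'a measure \<Rightarrow> ('a \<Rightarrow> complex) \<Rightarrow> real \<Rightarrow> ennreal" where
  "ol_modular \<phi> w M f \<alpha> =
     (\<integral>\<^sup>+ t\<in>{0<..}. phi_enn \<phi> (ennreal \<alpha> * decr_rearr M f t) * ennreal (w t) \<partial>lborel)"

definition OL_space ::
  "(real \<Rightarrow> real) \<Rightarrow> (real \<Rightarrow> real) \<Rightarrow> 'a measure \<Rightarrow> ('a \<Rightarrow> complex) set" where
  "OL_space \<phi> w M = {f \<in> borel_measurable M. \<exists>\<alpha>>0. ol_modular \<phi> w M f \<alpha> < \<infinity>}"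

definition lux_norm ::
  "(real \<Rightarrow> real) \<Rightarrow> (real \<Rightarrow> real) \<Rightarrow> 'a measure \<Rightarrow> ('a \<Rightarrow> complex) \<Rightarrow> real" where
  "lux_norm \<phi> w M f = Inf {l::real. 0 < l \<and> ol_modular \<phi> w M f (1 / l) \<le> 1}"

definition non_singular :: "'a measure \<Rightarrow> ('a \<Rightarrow> 'a) \<Rightarrow> bool" where
  "non_singular M \<Psi> \<longleftrightarrow>
     (\<forall>S\<in>sets M. emeasure M S = 0 \<longrightarrow> emeasure M (\<Psi> -` S \<inter> space M) = 0)"

definition pre_positive :: "'a measure \<Rightarrow> ('a \<Rightarrow> 'a) \<Rightarrow> bool" where
  "pre_positive M \<Psi> \<longleftrightarrow>
     (\<forall>A\<in>sets M. emeasure M A > 0 \<longrightarrow> emeasure M (\<Psi> -` A \<inter> space M) > 0)"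

text \<open>Bounded composition operator on the Orlicz-Lorentz space (linearity is automatic).\<close>
definition bounded_comp_op ::
  "(real \<Rightarrow> real) \<Rightarrow> (real \<Rightarrow> real) \<Rightarrow> 'a measure \<Rightarrow> ('a \<Rightarrow> 'a) \<Rightarrow> bool" where
  "bounded_comp_op \<phi> w M \<Psi> \<longleftrightarrow>
     (\<forall>f\<in>OL_space \<phi> w M. f \<circ> \<Psi> \<in> OL_space \<phi> w M) \<and>
     (\<exists>C. \<forall>f\<in>OL_space \<phi> w M. lux_norm \<phi> w M (f \<circ> \<Psi>) \<le> C * lux_norm \<phi> w M f)"

text \<open>Kernel of T^m on the space V, where elements are identified modulo the
  "zero" predicate Z (a.e. vanishing).\<close>
definition kernel_pow :: "'f set \<Rightarrow> ('f \<Rightarrow> bool) \<Rightarrow> ('f \<Rightarrow> 'f) \<Rightarrow> nat \<Rightarrow> 'f set" where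
  "kernel_pow V Z T m = {f \<in> V. Z ((T ^^ m) f)}"

definition ascent :: "'f set \<Rightarrow> ('f \<Rightarrow> bool) \<Rightarrow> ('f \<Rightarrow> 'f) \<Rightarrow> enat" where
  "ascent V Z T =
     (if \<exists>m. kernel_pow V Z T m = kernel_pow V Z T (Suc m)
      then enat (LEAST m. kernel_pow V Z T m = kernel_pow V Z T (Suc m)) else \<infinity>)"

end

theory Submission
  imports Defs
begin

text \<open>A pre-positive non-singular \<open>\<Psi>\<close> preserves and reflects null sets, so \<open>f \<circ> \<Psi>\<close> vanishes
  almost everywhere exactly when \<open>f\<close> does. Hence \<open>C\<^sub>\<Psi>\<close> is injective modulo null functions, i.e.
  its kernel equals that of \<open>C\<^sub>\<Psi>\<^sup>0 = I\<close>. Nothing about the Orlicz-Lorentz structure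
  (\<open>\<sigma>\<close>-finiteness, \<open>\<phi>\<close>, \<open>w\<close>, boundedness) is needed beyond measurability of its elements.\<close>

lemma ascent_eq_0_iff:
  "ascent V Z T = 0 \<longleftrightarrow> kernel_pow V Z T 0 = kernel_pow V Z T (Suc 0)"
proof
  assume "ascent V Z T = 0"
  then obtain m where "kernel_pow V Z T m = kernel_pow V Z T (Suc m)"
    and "(LEAST m. kernel_pow V Z T m = kernel_pow V Z T (Suc m)) = 0"
    unfolding ascent_def by (auto split: if_splits simp: zero_enat_def)
  then show "kernel_pow V Z T 0 = kernel_pow V Z T (Suc 0)"
    by (metis (mono_tags, lifting) LeastI)
next
  assume "kernel_pow V Z T 0 = kernel_pow V Z T (Suc 0)"
  then show "ascent V Z T = 0"
    unfolding ascent_def by (auto intro!: Least_eq_0 simp: zero_enat_def)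
qed

lemma emeasure_vimage_eq_0_iff:
  assumes "non_singular M \<Psi>" "pre_positive M \<Psi>" "A \<in> sets M"
  shows "emeasure M (\<Psi> -` A \<inter> space M) = 0 \<longleftrightarrow> emeasure M A = 0"
  using assms unfolding non_singular_def pre_positive_def by (metis not_gr_zero)

lemma AE_comp_iff:
  assumes \<Psi>: "\<Psi> \<in> M \<rightarrow>\<^sub>M M" "non_singular M \<Psi>" "pre_positive M \<Psi>"
    and P: "Measurable.pred M P"
  shows "(AE x in M. P (\<Psi> x)) \<longleftrightarrow> (AE x in M. P x)"
proof -
  define N where "N = {x \<in> space M. \<not> P x}"
  have N: "N \<in> sets M"
    unfolding N_def using P by measurable
  have vimage_N: "\<Psi> -` N \<inter> space M = {x \<in> space M. \<not> P (\<Psi> x)}"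
    using \<Psi>(1) unfolding N_def by (auto simp: measurable_def)
  have "(AE x in M. P x) \<longleftrightarrow> emeasure M N = 0"
    unfolding N_def using N N_def by (intro AE_iff_measurable) auto
  moreover have "(AE x in M. P (\<Psi> x)) \<longleftrightarrow> emeasure M (\<Psi> -` N \<inter> space M) = 0"
    unfolding vimage_N using measurable_sets[OF \<Psi>(1) N] vimage_N
    by (intro AE_iff_measurable) auto
  ultimately show ?thesis
    using emeasure_vimage_eq_0_iff[OF \<Psi>(2,3) N] by simp
qed

theorem theorem3p7:
  fixes M :: "'a measure" and \<phi> w :: "real \<Rightarrow> real" and \<Psi> :: "'a \<Rightarrow> 'a"
  assumes "sigma_finite_measure M"
    and "young_function \<phi>" and "delta2 \<phi>"
    and "weight_function w"
    and "\<Psi> \<in> M \<rightarrow>\<^sub>M M"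
    and "non_singular M \<Psi>"
    and "bounded_comp_op \<phi> w M \<Psi>"
    and "pre_positive M \<Psi>"
  shows "ascent (OL_space \<phi> w M) (\<lambda>f. AE x in M. f x = 0) (\<lambda>f. f \<circ> \<Psi>) = 0"
proof -
  have "(AE x in M. f (\<Psi> x) = 0) \<longleftrightarrow> (AE x in M. f x = 0)" if "f \<in> OL_space \<phi> w M" for f
    using that assms(5,6,8) by (intro AE_comp_iff) (auto simp: OL_space_def)
  then show ?thesis
    unfolding ascent_eq_0_iff kernel_pow_def by (intro Collect_cong conj_cong refl) simp_all
qed

end
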